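(* Let $q\in[0,1]$ and let $X_1,\dots,X_m$ be real numbers (observed $z$-statistics) with associated one-sided p-values $P_i=\Phi(X_i)$, where $\Phi$ is the standard normal cumulative distribution function. Let $P_{(1)}\le\dots\le P_{(m)}$ be the ordered p-values, $I^*=\max\{i: P_{(i)}\le (i/m)q\}$ and $P^*=P_{(I^* )}$ (with the convention that if no such $i$ exists the set $\{i:P_i\le P^*\}$ below is empty). Consider the iteration $\mathcal S^1=\{1,\dots,m\}$ and, for $t=1,2,\dots$, $$U_i^t=X_i+\Phi^{-1}\big(1-q|\mathcal S^t|/m\big),\ i\in\mathcal S^t,\qquad \mathcal S^{t+1}=\{i\in\mathcal S^t: U_i^t\le 0\}.$$ Then this iteration converges in finite time: there is a finite $T\ge1$ such that $\mathcal S^{T+1}=\mathcal S^T$ (taking $T$ to be the first such index) and $\mathcal S^t=\mathcal S^T$ for all $t\ge T$. Moreover, $\mathcal S^T=\{i: P_i\le P^*\}$, i.e. the set of hypotheses $H_i:\theta_i\ge 0$ rejected by the Benjamini–Hochberg procedure at level $q$.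
   Context: In the motivating model $X_i\sim\mathcal N(\theta_i,1)$ independently; the iteration is the repeated application of the Benjamini–Yekutieli one-sided confidence interval adjustment $(-\infty,U_i^t)$ followed by keeping only those intervals that do not cover $0$. The Benjamini–Hochberg procedure at level $q$ rejects $H_i$ iff $P_i\le P^*$. *)

theory Defs
  imports "HOL-Probability.Probability"
begin

definition Phi :: "real \<Rightarrow> real" where
  "Phi x = cdf (density lborel std_normal_density) x"

definition Phi_inv :: "real \<Rightarrow> ereal" where
  "Phi_inv p = (if p \<le> 0 then MInfty else if p \<ge> 1 then PInfty
                else ereal (THE x. Phi x = p))"

definition pval :: "(nat \<Rightarrow> real) \<Rightarrow> nat \<Rightarrow> real" where
  "pval X i = Phi (X i)"

text \<open>Ordered p-values P_(1) <= ... <= P_(m): P_(i) = ordered_pvals m X ! (i-1).\<close>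
definition ordered_pvals :: "nat \<Rightarrow> (nat \<Rightarrow> real) \<Rightarrow> real list" where
  "ordered_pvals m X = sort (map (pval X) [1..<m+1])"

definition BH_candidates :: "nat \<Rightarrow> real \<Rightarrow> (nat \<Rightarrow> real) \<Rightarrow> nat set" where
  "BH_candidates m q X =
     {i \<in> {1..m}. ordered_pvals m X ! (i - 1) \<le> real i / real m * q}"

definition BH_rejections :: "nat \<Rightarrow> real \<Rightarrow> (nat \<Rightarrow> real) \<Rightarrow> nat set" where
  "BH_rejections m q X =
     (if BH_candidates m q X = {} then {}
      else {i \<in> {1..m}. pval X i \<le> ordered_pvals m X ! (Max (BH_candidates m q X) - 1)})"

end

theory Submission
  imports Defs
begin

text \<open>Since \<open>\<Phi>(-x) = 1 - \<Phi>(x)\<close>, the bound \<open>U\<^sub>i = X\<^sub>i + \<Phi>\<^sup>-\<^sup>1(1 - q|S|/m)\<close> is \<open>\<le> 0\<close> exactly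
  when \<open>P\<^sub>i \<le> q|S|/m\<close>, so the iteration is \<open>S \<mapsto> {i \<in> S. P\<^sub>i \<le> q|S|/m}\<close>: a shrinking map
  on finite sets, which stabilises after finitely many steps. The BH set \<open>R = {i. P\<^sub>i \<le> P\<^sup>*}\<close>
  has at least \<open>I\<^sup>*\<close> elements and \<open>P\<^sup>* \<le> qI\<^sup>*/m\<close>, so it survives every step. Conversely the
  \<open>|A|\<close> p-values of a fixed point \<open>A\<close> are all \<open>\<le> q|A|/m\<close>, so the \<open>|A|\<close>-th smallest p-value
  is \<open>\<le> q|A|/m\<close>; hence \<open>|A| \<le> I\<^sup>* \<le> |R|\<close> and \<open>A = R\<close>.\<close>

abbreviation std_normal :: "real measure" where
  "std_normal \<equiv> density lborel std_normal_density"

interpretation std_normal: real_distribution std_normal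
proof -
  interpret prob_space std_normal by (rule prob_space_normal_density) simp
  show "real_distribution std_normal" by unfold_locales auto
qed

lemma Phi_eq_cdf: "Phi = cdf std_normal"
  by (simp add: Phi_def [abs_def])

lemma null_sets_std_normal_iff: "A \<in> null_sets std_normal \<longleftrightarrow> A \<in> null_sets lborel"
proof -
  have "std_normal_density x \<noteq> 0" for x
    using normal_density_pos [of 1 0 x] by simp
  then have "A \<in> null_sets std_normal \<longleftrightarrow> A \<in> sets lborel \<and> (AE x in lborel. x \<notin> A)"
    by (subst null_sets_density_iff) auto
  then show ?thesis
    using AE_iff_null_sets [of A lborel] null_setsD2 [of A lborel] by blast
qed

lemma measure_std_normal_singleton: "measure std_normal {x} = 0"
  using null_sets_std_normal_iff [of "{x}"] finite_imp_null_set_lborel [of "{x}"]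
  by (simp add: measure_def null_setsD1)

lemma isCont_Phi: "isCont Phi x"
  unfolding Phi_eq_cdf using std_normal.isCont_cdf measure_std_normal_singleton by blast

lemma Phi_strict_mono: "x < y \<Longrightarrow> Phi x < Phi y"
proof -
  assume "x < y"
  then have "{x<..y} \<notin> null_sets std_normal"
    using null_sets_std_normal_iff null_setsD1 [of "{x<..y}" lborel] by auto
  then have "measure std_normal {x<..y} \<noteq> 0"
    by (auto simp: std_normal.emeasure_eq_measure intro: null_setsI)
  then have "0 < measure std_normal {x<..y}"
    using measure_nonneg [of std_normal "{x<..y}"] by linarith
  then show "Phi x < Phi y"
    unfolding Phi_eq_cdf using std_normal.cdf_diff_eq [OF \<open>x < y\<close>] by linarith
qed

lemma Phi_le_iff [simp]: "Phi x \<le> Phi y \<longleftrightarrow> x \<le> y"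
  by (cases x y rule: linorder_cases) (auto dest: Phi_strict_mono)

lemma Phi_pos: "0 < Phi x"
  using Phi_strict_mono [of "x - 1" x] std_normal.cdf_nonneg [of "x - 1"]
  unfolding Phi_eq_cdf by simp

lemma Phi_less_1: "Phi x < 1"
  using Phi_strict_mono [of x "x + 1"] std_normal.cdf_bounded_prob [of "x + 1"]
  unfolding Phi_eq_cdf by simp

lemma Phi_minus: "Phi (- x) = 1 - Phi x"
proof -
  have "emeasure std_normal {..-x} =
      (\<integral>\<^sup>+t. ennreal (std_normal_density t) * indicator {..-x} t \<partial>lborel)"
    by (rule emeasure_density) auto
  also have "\<dots> = (\<integral>\<^sup>+t. ennreal (std_normal_density (0 + -1 * t)) * indicator {..-x} (0 + -1 * t) \<partial>lborel)"
    using nn_integral_real_affine [of "\<lambda>t. ennreal (std_normal_density t) * indicator {..-x} t" "-1" 0]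
    by simp
  also have "\<dots> = (\<integral>\<^sup>+t. ennreal (std_normal_density t) * indicator {x..} t \<partial>lborel)"
    by (intro nn_integral_cong) (auto simp: normal_density_def indicator_def)
  also have "\<dots> = emeasure std_normal {x..}"
    by (rule emeasure_density [symmetric]) auto
  finally have "Phi (- x) = measure std_normal {x..}"
    by (simp add: Phi_eq_cdf cdf_def std_normal.emeasure_eq_measure)
  also have "\<dots> = 1 - measure std_normal {..<x}"
    using std_normal.prob_compl [of "{..<x}"] by (simp add: Compl_eq_Diff_UNIV [symmetric] Compl_lessThan)
  also have "measure std_normal {..<x} = measure std_normal {..x}"
    using std_normal.finite_measure_Union [of "{..<x}" "{x}"] measure_std_normal_singleton [of x]
    by (simp add: ivl_disj_un_singleton(2) [symmetric])
  finally show ?thesis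
    by (simp add: Phi_eq_cdf cdf_def)
qed

lemma Phi_surj: "0 < p \<Longrightarrow> p < 1 \<Longrightarrow> \<exists>y. Phi y = p"
proof -
  assume p: "0 < p" "p < 1"
  obtain a where a: "Phi a < p"
    using order_tendstoD(2) [OF std_normal.cdf_lim_at_bot p(1)]
    by (auto simp: Phi_eq_cdf eventually_at_bot_linorder)
  obtain b where b: "p < Phi b"
    using order_tendstoD(1) [OF std_normal.cdf_lim_at_top_prob p(2)]
    by (auto simp: Phi_eq_cdf eventually_at_top_linorder)
  have "a \<le> b"
    using a b Phi_le_iff [of b a] by linarith
  with a b show ?thesis
    using IVT' [of Phi a p b] isCont_Phi by (force intro: continuous_at_imp_continuous_on)
qed

lemma Phi_inv_eq_ereal_iff: "0 < p \<Longrightarrow> p < 1 \<Longrightarrow> Phi_inv p = ereal y \<longleftrightarrow> Phi y = p"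
proof -
  assume p: "0 < p" "p < 1"
  then obtain z where "Phi z = p"
    using Phi_surj by blast
  then have "\<exists>!z. Phi z = p"
    by (metis Phi_le_iff order_antisym order_refl)
  then show ?thesis
    using p theI' [of "\<lambda>z. Phi z = p"] by (auto simp: Phi_inv_def)
qed

lemma ereal_add_Phi_inv_le_0_iff: "ereal x + Phi_inv (1 - p) \<le> 0 \<longleftrightarrow> Phi x \<le> p"
proof -
  consider "p \<le> 0" | "1 \<le> p" | "0 < p" "p < 1"
    by linarith
  then show ?thesis
  proof cases
    case 3
    then obtain y where y: "Phi y = 1 - p"
      using Phi_surj [of "1 - p"] by auto
    with 3 have "Phi_inv (1 - p) = ereal y"
      by (simp add: Phi_inv_eq_ereal_iff)
    then have "ereal x + Phi_inv (1 - p) \<le> 0 \<longleftrightarrow> Phi x \<le> Phi (- y)"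
      by auto
    also have "Phi (- y) = p"
      by (simp add: Phi_minus y)
    finally show ?thesis .
  qed (use Phi_pos [of x] Phi_less_1 [of x] in \<open>auto simp: Phi_inv_def\<close>)
qed

lemma sorted_nth_le_iff_card:
  fixes L :: "'a :: linorder list"
  assumes "sorted L" "r < length L"
  shows "L ! r \<le> c \<longleftrightarrow> r < card {j. j < length L \<and> L ! j \<le> c}"
proof
  assume "L ! r \<le> c"
  with assms have "{..r} \<subseteq> {j. j < length L \<and> L ! j \<le> c}"
    by (auto intro: order_trans [OF sorted_nth_mono [OF assms(1)]])
  from card_mono [OF _ this] show "r < card {j. j < length L \<and> L ! j \<le> c}"
    by simp
next
  assume less: "r < card {j. j < length L \<and> L ! j \<le> c}"
  show "L ! r \<le> c"
  proof (rule ccontr)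
    assume "\<not> L ! r \<le> c"
    have "j < r" if "j < length L" "L ! j \<le> c" for j
    proof (rule ccontr)
      assume "\<not> j < r"
      then have "L ! r \<le> L ! j"
        using sorted_nth_mono [OF assms(1)] that(1) by simp
      with that(2) \<open>\<not> L ! r \<le> c\<close> show False
        by simp
    qed
    then have "{j. j < length L \<and> L ! j \<le> c} \<subseteq> {..<r}"
      by auto
    from card_mono [OF _ this] less show False
      by simp
  qed
qed

lemma ordered_pvals_nth_le_iff:
  assumes "r < m"
  shows "ordered_pvals m X ! r \<le> c \<longleftrightarrow> r < card {j \<in> {1..m}. pval X j \<le> c}"
proof -
  let ?L = "ordered_pvals m X"
  have "card {j. j < length ?L \<and> ?L ! j \<le> c} = length (filter (\<lambda>v. v \<le> c) ?L)"
    by (rule length_filter_conv_card [symmetric])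
  also have "\<dots> = length (filter (\<lambda>v. v \<le> c) (map (pval X) [1..<m+1]))"
    unfolding ordered_pvals_def by (metis mset_filter mset_sort size_mset)
  also have "\<dots> = length (filter (\<lambda>j. pval X j \<le> c) [1..<m+1])"
    by (simp add: filter_map o_def)
  also have "\<dots> = card (set (filter (\<lambda>j. pval X j \<le> c) [1..<m+1]))"
    by (simp only: distinct_card [OF distinct_filter [OF distinct_upt]])
  also have "set (filter (\<lambda>j. pval X j \<le> c) [1..<m+1]) = {j \<in> {1..m}. pval X j \<le> c}"
    by auto
  finally show ?thesis
    using assms sorted_nth_le_iff_card [of ?L r c] by (simp add: ordered_pvals_def)
qed

abbreviation BH_index :: "nat \<Rightarrow> real \<Rightarrow> (nat \<Rightarrow> real) \<Rightarrow> nat" where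
  "BH_index m q X \<equiv> Max (BH_candidates m q X)"

lemma BH_index_mem:
  "BH_candidates m q X \<noteq> {} \<Longrightarrow> BH_index m q X \<in> BH_candidates m q X"
  by (rule Max_in) (auto simp: BH_candidates_def)

lemma le_BH_index: "k \<in> BH_candidates m q X \<Longrightarrow> k \<le> BH_index m q X"
  by (rule Max_ge) (auto simp: BH_candidates_def)

lemma BH_rejections_subset: "BH_rejections m q X \<subseteq> {1..m}"
  by (auto simp: BH_rejections_def)

lemma BH_index_le_card_BH_rejections:
  assumes "BH_candidates m q X \<noteq> {}"
  shows "BH_index m q X \<le> card (BH_rejections m q X)"
proof -
  let ?I = "BH_index m q X"
  have "?I \<in> {1..m}"
    using BH_index_mem [OF assms] by (simp add: BH_candidates_def)
  then have "?I - 1 < card {j \<in> {1..m}. pval X j \<le> ordered_pvals m X ! (?I - 1)}"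
    by (subst ordered_pvals_nth_le_iff [symmetric]) auto
  with assms show ?thesis
    by (simp add: BH_rejections_def)
qed

lemma card_mem_BH_candidates:
  assumes "A \<subseteq> {1..m}" "A \<noteq> {}" "\<forall>i \<in> A. pval X i \<le> q * real (card A) / real m"
  shows "card A \<in> BH_candidates m q X"
proof -
  have "finite A"
    using assms(1) finite_subset by blast
  then have "0 < card A"
    using assms(2) card_gt_0_iff by blast
  have "card A \<le> m"
    using card_mono [OF _ assms(1)] by simp
  have "A \<subseteq> {j \<in> {1..m}. pval X j \<le> q * real (card A) / real m}"
    using assms(1,3) by auto
  from card_mono [OF _ this]
  have "ordered_pvals m X ! (card A - 1) \<le> q * real (card A) / real m"
    using ordered_pvals_nth_le_iff [of "card A - 1" m X] \<open>0 < card A\<close> \<open>card A \<le> m\<close> by simp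
  then show ?thesis
    using \<open>0 < card A\<close> \<open>card A \<le> m\<close> by (simp add: BH_candidates_def mult.commute)
qed

definition BY_select :: "nat \<Rightarrow> real \<Rightarrow> (nat \<Rightarrow> real) \<Rightarrow> nat set \<Rightarrow> nat set" where
  "BY_select m q X A = {i \<in> A. pval X i \<le> q * real (card A) / real m}"

lemma BY_select_subset: "BY_select m q X A \<subseteq> A"
  by (auto simp: BY_select_def)

lemma BH_rejections_subset_BY_select:
  assumes "0 \<le> q" "BH_rejections m q X \<subseteq> A" "finite A"
  shows "BH_rejections m q X \<subseteq> BY_select m q X A"
proof (cases "BH_candidates m q X = {}")
  case False
  let ?I = "BH_index m q X"
  have P_I: "ordered_pvals m X ! (?I - 1) \<le> real ?I / real m * q"
    using BH_index_mem [OF False] by (simp add: BH_candidates_def)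
  have "?I \<le> card A"
    using BH_index_le_card_BH_rejections [OF False] card_mono [OF assms(3,2)] by linarith
  then have "real ?I / real m * q \<le> q * real (card A) / real m"
    using assms(1) by (simp add: divide_right_mono mult.commute mult_left_mono)
  with P_I False assms(2) show ?thesis
    by (auto simp: BH_rejections_def BY_select_def)
qed (simp add: BH_rejections_def)

lemma BY_select_fixed_point_eq_BH_rejections:
  assumes "BY_select m q X A = A" "BH_rejections m q X \<subseteq> A" "A \<subseteq> {1..m}"
  shows "A = BH_rejections m q X"
proof (cases "A = {}")
  case False
  have "card A \<in> BH_candidates m q X"
    using assms(1,3) False card_mem_BH_candidates [of A m X q] by (auto simp: BY_select_def)
  then have "card A \<le> card (BH_rejections m q X)"
    using le_BH_index BH_index_le_card_BH_rejections by (metis empty_iff le_trans)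
  moreover have "finite A"
    using assms(3) finite_subset by blast
  ultimately show ?thesis
    using assms(2) card_seteq by blast
qed (use assms(2) in auto)

lemma deflationary_iteration_stabilises:
  fixes f :: "'a set \<Rightarrow> 'a set" and S :: "nat \<Rightarrow> 'a set"
  assumes "finite (S 1)" and shrink: "\<And>A. f A \<subseteq> A"
    and iterate: "\<And>t. t \<ge> 1 \<Longrightarrow> S (t + 1) = f (S t)"
  shows "\<exists>T \<ge> 1. S (T + 1) = S T
           \<and> (\<forall>t. 1 \<le> t \<and> t < T \<longrightarrow> S (t + 1) \<noteq> S t)
           \<and> (\<forall>t \<ge> T. S t = S T)"
proof -
  have finite: "finite (S t)" if "t \<ge> 1" for t
    using that
  proof (induction t rule: dec_induct)
    case (step n)
    then show ?case
      using iterate [of n] finite_subset [OF shrink] by simp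
  qed (rule assms(1))
  have "\<exists>t \<ge> 1. S (t + 1) = S t"
  proof (rule ccontr)
    assume "\<not> ?thesis"
    then have card_less: "card (S (t + 1)) < card (S t)" if "t \<ge> 1" for t
      using shrink iterate [OF that] finite [OF that] that by (metis psubsetI psubset_card_mono)
    have "card (S (n + 1)) + n \<le> card (S 1)" for n
    proof (induction n)
      case (Suc n)
      then show ?case
        using card_less [of "n + 1"] by simp
    qed simp
    from this [of "card (S 1) + 1"] show False
      by simp
  qed
  define T where "T = (LEAST t. t \<ge> 1 \<and> S (t + 1) = S t)"
  have T: "T \<ge> 1" "S (T + 1) = S T"
    using LeastI_ex [of "\<lambda>t. t \<ge> 1 \<and> S (t + 1) = S t"] \<open>\<exists>t \<ge> 1. S (t + 1) = S t\<close>
    unfolding T_def by auto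
  moreover have "S (t + 1) \<noteq> S t" if "1 \<le> t" "t < T" for t
    using not_less_Least [of t "\<lambda>t. t \<ge> 1 \<and> S (t + 1) = S t"] that unfolding T_def by auto
  moreover have "S t = S T" if "t \<ge> T" for t
    using that
  proof (induction t rule: dec_induct)
    case (step n)
    then show ?case
      using iterate [of n] iterate [of T] T by simp
  qed simp
  ultimately show ?thesis
    by blast
qed

theorem proposition1:
  fixes m :: nat and q :: real and X :: "nat \<Rightarrow> real" and S :: "nat \<Rightarrow> nat set"
  assumes "0 \<le> q" and "q \<le> 1"
    and S1: "S 1 = {1..m}"
    and Sstep: "\<And>t. t \<ge> 1 \<Longrightarrow>
       S (t + 1) = {i \<in> S t. ereal (X i) + Phi_inv (1 - q * real (card (S t)) / real m) \<le> 0}"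
  shows "\<exists>T \<ge> 1. S (T + 1) = S T
            \<and> (\<forall>t. 1 \<le> t \<and> t < T \<longrightarrow> S (t + 1) \<noteq> S t)
            \<and> (\<forall>t \<ge> T. S t = S T)
            \<and> S T = BH_rejections m q X"
proof -
  \<comment> \<open>\<open>ereal_add_Phi_inv_le_0_iff\<close> holds for every level\<close>
  have S_eq_BY_select: "S (t + 1) = BY_select m q X (S t)" if "t \<ge> 1" for t
    using Sstep [OF that] by (simp add: BY_select_def pval_def ereal_add_Phi_inv_le_0_iff)
  have "\<exists>T \<ge> 1. S (T + 1) = S T
           \<and> (\<forall>t. 1 \<le> t \<and> t < T \<longrightarrow> S (t + 1) \<noteq> S t)
           \<and> (\<forall>t \<ge> T. S t = S T)"
    using deflationary_iteration_stabilises [of S "BY_select m q X"] S1 BY_select_subset S_eq_BY_select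
    by simp
  then obtain T where T: "T \<ge> 1" "S (T + 1) = S T"
      "\<forall>t. 1 \<le> t \<and> t < T \<longrightarrow> S (t + 1) \<noteq> S t" "\<forall>t \<ge> T. S t = S T"
    by blast
  have "S t \<subseteq> {1..m} \<and> BH_rejections m q X \<subseteq> S t" if "t \<ge> 1" for t
    using that
  proof (induction t rule: dec_induct)
    case (step n)
    then have "finite (S n)"
      using finite_subset by blast
    have "S (Suc n) \<subseteq> S n"
      using S_eq_BY_select [of n] step(1) BY_select_subset by simp
    moreover have "BH_rejections m q X \<subseteq> S (Suc n)"
      using S_eq_BY_select [of n] step BH_rejections_subset_BY_select [OF \<open>0 \<le> q\<close> _ \<open>finite (S n)\<close>]
      by simp
    ultimately show ?case
      using step(3) by blast
  qed (use S1 BH_rejections_subset in auto)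
  with T(1) have "S T = BH_rejections m q X"
    using BY_select_fixed_point_eq_BH_rejections S_eq_BY_select [OF T(1)] T(2) by simp
  with T show ?thesis
    by blast
qed

end
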